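(* Consider the sparse linear Gaussian model: $S\in\{1,\dots,N\}$, $\mathcal{X}_S=\{\mathbf{x}\in\mathbb{R}^N:\|\mathbf{x}\|_0\le S\}$, $\sigma>0$, observation $\mathbf{y}=\mathbf{H}\mathbf{x}+\mathbf{n}$, $\mathbf{n}\sim\mathcal{N}(\mathbf{0},\sigma^2\mathbf{I})$, parameter function $g(\mathbf{x})=x_k$ for fixed $k\in[N]$, where $\mathbf{H}\in\mathbb{R}^{M\times N}$ with $M\le N$ satisfies the restricted isometry property of order $S$ with RIP constant $\delta_S<1$. Let $\mathbf{x}_0\in\mathcal{X}_S$ and $\mathcal{K}=\{k_1,\dots,k_{|\mathcal{K}|}\}\subseteq[N]$ with $|\mathcal{K}|\le S$. Let $\mathbf{P}=\mathbf{H}_{\mathcal{K}}(\mathbf{H}_{\mathcal{K}})^{\dagger}$ and $\widetilde{\mathbf{x}}_0$ the unique vector with $\operatorname{supp}(\widetilde{\mathbf{x}}_0)\subseteq\mathcal{K}$ and $\mathbf{H}\widetilde{\mathbf{x}}_0=\mathbf{P}\mathbf{H}\mathbf{x}_0$. Let $c:\mathcal{X}_S\to\mathbb{R}$ be a bias function whose partial derivatives $\frac{\partial c(\mathbf{x})}{\partial x_l}\big|_{\mathbf{x}=\widetilde{\mathbf{x}}_0}$ exist for all $l\in\mathcal{K}$, and let $(\mathbf{b}_{\mathbf{x}_0})_i=\delta_{k,k_i}+\frac{\partial c(\mathbf{x})}{\partial x_{k_i}}\big|_{\mathbf{x}=\widetilde{\mathbf{x}}_0}$, $i\in[|\mathcal{K}|]$.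 Then $$M(c,\mathbf{x}_0)\ \ge\ \exp\Big(-\tfrac{1+\delta_S}{\sigma^2}\big\|\mathbf{x}_0^{\operatorname{supp}(\mathbf{x}_0)\setminus\mathcal{K}}\big\|_2^2\Big)\,\sigma^2\,\mathbf{b}_{\mathbf{x}_0}^T(\mathbf{H}_{\mathcal{K}}^T\mathbf{H}_{\mathcal{K}})^{-1}\mathbf{b}_{\mathbf{x}_0}.$$
   Context: RIP of order $K$ with constant $\delta_K$: $\delta_K$ is the smallest $\delta\ge0$ such that $(1-\delta)\|\mathbf{z}\|_2^2\le\|\mathbf{H}_{\mathcal{I}}\mathbf{z}\|_2^2\le(1+\delta)\|\mathbf{z}\|_2^2$ for all $\mathcal{I}\subseteq[N]$ with $|\mathcal{I}|=K$ and all $\mathbf{z}\in\mathbb{R}^K$. $\mathbf{H}_{\mathcal{K}}$ = columns of $\mathbf{H}$ indexed by $\mathcal{K}$; for an index set $\mathcal{I}$, $\mathbf{x}^{\mathcal{I}}$ is $\mathbf{x}$ with all entries outside $\mathcal{I}$ set to zero; $\dagger$ = pseudoinverse; $\delta_{k,l}$ = Kronecker delta. An estimator $\hat g:\mathbb{R}^M\to\mathbb{R}$ has bias $\mathsf{E}_{\mathbf{x}}\{\hat g(\mathbf{y})\}-x_k$ and variance $v(\hat g;\mathbf{x})$; $M(c,\mathbf{x}_0)$ is the infimum of $v(\hat g;\mathbf{x}_0)$ over estimators with finite variance at $\mathbf{x}_0$ and bias equal to $c$ on all of $\mathcal{X}_S$ ($+\infty$ if none). *)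

theory Defs
  imports "HOL-Probability.Probability" "Jordan_Normal_Form.Matrix"
begin

text \<open>Observations y in R^M are represented as functions nat => real on the index set {..<M}
  (elements of the product measure space).\<close>

definition supp_vec :: "real vec \<Rightarrow> nat set" where
  "supp_vec x = {i. i < dim_vec x \<and> x $ i \<noteq> 0}"

definition sparse_set :: "nat \<Rightarrow> nat \<Rightarrow> real vec set" where
  "sparse_set N S = {x \<in> carrier_vec N. card (supp_vec x) \<le> S}"

definition restrict_vec :: "real vec \<Rightarrow> nat set \<Rightarrow> real vec" where
  "restrict_vec x I = vec (dim_vec x) (\<lambda>i. if i \<in> I then x $ i else 0)"

text \<open>H_I z is written as H applied to the zero-padded vector supported on I.\<close>
definition rip_const :: "real mat \<Rightarrow> nat \<Rightarrow> real" where
  "rip_const H K = Inf {\<delta>. \<delta> \<ge> 0 \<and>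
     (\<forall>I. I \<subseteq> {..<dim_col H} \<and> card I = K \<longrightarrow>
        (\<forall>z \<in> carrier_vec (dim_col H). (\<forall>i<dim_col H. i \<notin> I \<longrightarrow> z $ i = 0) \<longrightarrow>
           (1 - \<delta>) * (scalar_prod z z) \<le> scalar_prod (H *\<^sub>v z) (H *\<^sub>v z) \<and>
           scalar_prod (H *\<^sub>v z) (H *\<^sub>v z) \<le> (1 + \<delta>) * (scalar_prod z z)))}"

definition col_submat :: "real mat \<Rightarrow> nat list \<Rightarrow> real mat" where
  "col_submat H ks = mat (dim_row H) (length ks) (\<lambda>(i, j). H $$ (i, ks ! j))"

definition pinv_mat :: "real mat \<Rightarrow> real mat" where
  "pinv_mat A = (THE B. B \<in> carrier_mat (dim_col A) (dim_row A) \<and>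
      A * B * A = A \<and> B * A * B = B \<and>
      transpose_mat (A * B) = A * B \<and> transpose_mat (B * A) = B * A)"

definition inv_mat :: "real mat \<Rightarrow> real mat" where
  "inv_mat A = (THE B. B \<in> carrier_mat (dim_row A) (dim_row A) \<and>
      A * B = 1\<^sub>m (dim_row A) \<and> B * A = 1\<^sub>m (dim_row A))"

definition obs_dist :: "real mat \<Rightarrow> real \<Rightarrow> real vec \<Rightarrow> (nat \<Rightarrow> real) measure" where
  "obs_dist H \<sigma> x = PiM {..<dim_row H} (\<lambda>i. density lborel (normal_density ((H *\<^sub>v x) $ i) \<sigma>))"

definition estimators :: "nat \<Rightarrow> ((nat \<Rightarrow> real) \<Rightarrow> real) set" where
  "estimators M = borel_measurable (PiM {..<M} (\<lambda>_. lborel))"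

definition est_mean :: "real mat \<Rightarrow> real \<Rightarrow> ((nat \<Rightarrow> real) \<Rightarrow> real) \<Rightarrow> real vec \<Rightarrow> real" where
  "est_mean H \<sigma> g x = (\<integral>y. g y \<partial>obs_dist H \<sigma> x)"

definition est_bias :: "real mat \<Rightarrow> real \<Rightarrow> nat \<Rightarrow> ((nat \<Rightarrow> real) \<Rightarrow> real) \<Rightarrow> real vec \<Rightarrow> real" where
  "est_bias H \<sigma> k g x = est_mean H \<sigma> g x - x $ k"

definition est_var :: "real mat \<Rightarrow> real \<Rightarrow> ((nat \<Rightarrow> real) \<Rightarrow> real) \<Rightarrow> real vec \<Rightarrow> real" where
  "est_var H \<sigma> g x = (\<integral>y. (g y - est_mean H \<sigma> g x)\<^sup>2 \<partial>obs_dist H \<sigma> x)"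

definition finite_var :: "real mat \<Rightarrow> real \<Rightarrow> ((nat \<Rightarrow> real) \<Rightarrow> real) \<Rightarrow> real vec \<Rightarrow> bool" where
  "finite_var H \<sigma> g x \<longleftrightarrow> integrable (obs_dist H \<sigma> x) g \<and>
      integrable (obs_dist H \<sigma> x) (\<lambda>y. (g y)\<^sup>2)"

text \<open>M(c, x0): infimum of the variance at x0 over estimators with finite variance at x0
  and bias equal to c on all of X_S (Inf of the empty set is +infinity).\<close>
definition min_var :: "real mat \<Rightarrow> real \<Rightarrow> nat \<Rightarrow> nat \<Rightarrow> (real vec \<Rightarrow> real) \<Rightarrow> real vec \<Rightarrow> ereal" where
  "min_var H \<sigma> S k c x0 = Inf ((\<lambda>g. ereal (est_var H \<sigma> g x0)) `
     {g \<in> estimators (dim_row H). finite_var H \<sigma> g x0 \<and>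
        (\<forall>x \<in> sparse_set (dim_col H) S. integrable (obs_dist H \<sigma> x) g \<and>
            est_bias H \<sigma> k g x = c x)})"

definition partial_at :: "(real vec \<Rightarrow> real) \<Rightarrow> real vec \<Rightarrow> nat \<Rightarrow> real" where
  "partial_at c x l = deriv (\<lambda>t. c (x + t \<cdot>\<^sub>v unit_vec (dim_vec x) l)) 0"

definition has_partial_at :: "(real vec \<Rightarrow> real) \<Rightarrow> real vec \<Rightarrow> nat \<Rightarrow> bool" where
  "has_partial_at c x l \<longleftrightarrow> (\<lambda>t. c (x + t \<cdot>\<^sub>v unit_vec (dim_vec x) l)) differentiable (at 0)"

end

(*
  A Barankin-type bound. Take the test points x_j = xt + t e_(k_j), j = 1..|K|, all in X_S since
  supp xt is contained in K. Unbiasedness on X_S fixes the means of an admissible estimator g at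
  xt and at the x_j, and Cauchy-Schwarz of g - E g against a linear combination of the Gaussian
  likelihood ratios L_(x_j) - L_xt (relative to x0) bounds Var g at x0 from below. The
  correlations E_x0 [L_x L_x'] = exp (<H x - H x0, H x' - H x0> / sigma^2) factor, because
  H xt - H x0 is orthogonal to the range of H_K, into exp (|H xt - H x0|^2 / sigma^2) times
  exp (t^2 (H_K^T H_K)_(ij) / sigma^2). Dividing the weights by t and letting t -> 0 turns
  the bound into (a . b)^2 <= Var g * exp (|H xt - H x0|^2 / sigma^2) * a^T H_K^T H_K a / sigma^2,
  which for a = (H_K^T H_K)^-1 b is the claim; the RIP bounds |H xt - H x0|^2 by
  (1 + delta_S) |x0 restricted to supp x0 - K|^2.
*)

theory Submission
  imports Defs "Jordan_Normal_Form.Determinant"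
begin

unbundle no vec_syntax

section \<open>Gaussian shift experiments\<close>

definition gauss_PiM :: "real \<Rightarrow> nat \<Rightarrow> (nat \<Rightarrow> real) \<Rightarrow> (nat \<Rightarrow> real) measure" where
  "gauss_PiM \<sigma> m \<mu> = PiM {..<m} (\<lambda>i. density lborel (normal_density (\<mu> i) \<sigma>))"

definition gauss_lr :: "real \<Rightarrow> nat \<Rightarrow> (nat \<Rightarrow> real) \<Rightarrow> (nat \<Rightarrow> real) \<Rightarrow> (nat \<Rightarrow> real) \<Rightarrow> real" where
  "gauss_lr \<sigma> m \<mu> \<mu>0 y = (\<Prod>i<m. normal_density (\<mu> i) \<sigma> (y i) / normal_density (\<mu>0 i) \<sigma> (y i))"

definition gauss_kernel :: "real \<Rightarrow> nat \<Rightarrow> (nat \<Rightarrow> real) \<Rightarrow> (nat \<Rightarrow> real) \<Rightarrow> (nat \<Rightarrow> real) \<Rightarrow> real" where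
  "gauss_kernel \<sigma> m \<mu>0 \<mu> \<mu>' = exp (\<Sum>i<m. (\<mu> i - \<mu>0 i) * (\<mu>' i - \<mu>0 i) / \<sigma>\<^sup>2)"

lemma obs_dist_eq_gauss_PiM: "obs_dist H \<sigma> x = gauss_PiM \<sigma> (dim_row H) (\<lambda>i. (H *\<^sub>v x) $ i)"
  unfolding obs_dist_def gauss_PiM_def ..

lemma product_sigma_finite_normal_density:
  "0 < \<sigma> \<Longrightarrow> product_sigma_finite (\<lambda>i. density lborel (normal_density (\<mu> i) \<sigma>))"
  unfolding product_sigma_finite_def
  using prob_space_normal_density prob_space_imp_sigma_finite by blast

lemma prob_space_gauss_PiM: "0 < \<sigma> \<Longrightarrow> prob_space (gauss_PiM \<sigma> m \<mu>)"
  unfolding gauss_PiM_def by (intro prob_space_PiM prob_space_normal_density)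

lemma sets_gauss_PiM [measurable_cong]: "sets (gauss_PiM \<sigma> m \<mu>) = sets (PiM {..<m} (\<lambda>_. lborel))"
  unfolding gauss_PiM_def by (intro sets_PiM_cong) auto

lemma borel_measurable_gauss_PiM:
  "g \<in> borel_measurable (PiM {..<m} (\<lambda>_. lborel)) \<Longrightarrow> g \<in> borel_measurable (gauss_PiM \<sigma> m \<mu>)"
  using measurable_cong_sets[OF sets_gauss_PiM refl, of \<sigma> m \<mu> borel] by simp

lemma measurable_gauss_lr [measurable]: "gauss_lr \<sigma> m \<mu> \<mu>0 \<in> borel_measurable (PiM {..<m} (\<lambda>_. lborel))"
  unfolding gauss_lr_def by measurable

lemma gauss_lr_nonneg: "0 \<le> gauss_lr \<sigma> m \<mu> \<mu>0 y"
  unfolding gauss_lr_def by (intro prod_nonneg) auto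

lemma indicator_PiE_eq_prod:
  assumes "finite I" "y \<in> extensional I"
  shows "indicator (PiE I A) y = (\<Prod>i\<in>I. indicator (A i) (y i) :: ennreal)"
proof (cases "y \<in> PiE I A")
  case False
  then obtain i where "i \<in> I" "y i \<notin> A i" using assms by (auto simp: PiE_iff)
  with assms(1) have "(\<Prod>i\<in>I. indicator (A i) (y i) :: ennreal) = 0"
    by (intro prod_zero) (auto intro!: bexI[of _ i])
  with False show ?thesis by simp
qed (auto simp: PiE_iff intro!: prod.neutral[symmetric])

lemma nn_integral_normal_density_ratio:
  assumes "0 < \<sigma>" and [measurable]: "A \<in> sets borel"
  shows "(\<integral>\<^sup>+ t. ennreal (normal_density a \<sigma> t / normal_density a0 \<sigma> t) * indicator A t
            \<partial>density lborel (normal_density a0 \<sigma>))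
       = emeasure (density lborel (normal_density a \<sigma>)) A"
proof -
  have "(\<integral>\<^sup>+ t. ennreal (normal_density a \<sigma> t / normal_density a0 \<sigma> t) * indicator A t
            \<partial>density lborel (normal_density a0 \<sigma>))
      = (\<integral>\<^sup>+ t. ennreal (normal_density a0 \<sigma> t) *
            (ennreal (normal_density a \<sigma> t / normal_density a0 \<sigma> t) * indicator A t) \<partial>lborel)"
    by (intro nn_integral_density) auto
  also have "\<dots> = (\<integral>\<^sup>+ t. ennreal (normal_density a \<sigma> t) * indicator A t \<partial>lborel)"
    using normal_density_pos[OF assms(1), of a0, THEN less_imp_neq]
    by (intro nn_integral_cong) (simp add: mult.assoc[symmetric] ennreal_mult[symmetric])
  also have "\<dots> = emeasure (density lborel (normal_density a \<sigma>)) A"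
    by (intro emeasure_density[symmetric]) auto
  finally show ?thesis .
qed

lemma gauss_PiM_eq_density:
  assumes "0 < \<sigma>"
  shows "gauss_PiM \<sigma> m \<mu> = density (gauss_PiM \<sigma> m \<mu>0) (\<lambda>y. ennreal (gauss_lr \<sigma> m \<mu> \<mu>0 y))"
proof -
  let ?N = "\<lambda>\<mu> i. density lborel (normal_density (\<mu> i) \<sigma>)"
  interpret P: product_sigma_finite "?N \<mu>"
    using product_sigma_finite_normal_density[OF assms] .
  interpret P0: product_sigma_finite "?N \<mu>0"
    using product_sigma_finite_normal_density[OF assms] .
  have "density (PiM {..<m} (?N \<mu>0)) (\<lambda>y. ennreal (gauss_lr \<sigma> m \<mu> \<mu>0 y)) = PiM {..<m} (?N \<mu>)"
  proof (rule P.PiM_eqI)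
    show "sets (density (PiM {..<m} (?N \<mu>0)) (\<lambda>y. ennreal (gauss_lr \<sigma> m \<mu> \<mu>0 y)))
        = sets (PiM {..<m} (?N \<mu>))"
      by (simp, intro sets_PiM_cong) auto
    fix A assume "\<And>i. i \<in> {..<m} \<Longrightarrow> A i \<in> sets (?N \<mu> i)"
    then have A [measurable]: "A i \<in> sets borel" if "i \<in> {..<m}" for i
      using that by simp
    have [measurable]: "PiE {..<m} A \<in> sets (PiM {..<m} (?N \<mu>0))"
      by (intro sets_PiM_I_finite) auto
    have "emeasure (density (PiM {..<m} (?N \<mu>0)) (\<lambda>y. ennreal (gauss_lr \<sigma> m \<mu> \<mu>0 y))) (PiE {..<m} A)
      = \<integral>\<^sup>+ y. ennreal (gauss_lr \<sigma> m \<mu> \<mu>0 y) * indicator (PiE {..<m} A) y \<partial>PiM {..<m} (?N \<mu>0)"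
      by (rule emeasure_density) measurable
    also have "\<dots> = \<integral>\<^sup>+ y. (\<Prod>i<m. ennreal (normal_density (\<mu> i) \<sigma> (y i) / normal_density (\<mu>0 i) \<sigma> (y i))
                              * indicator (A i) (y i)) \<partial>PiM {..<m} (?N \<mu>0)"
    proof (intro nn_integral_cong)
      fix y assume "y \<in> space (PiM {..<m} (?N \<mu>0))"
      then have "y \<in> extensional {..<m}" by (auto simp: space_PiM PiE_iff)
      then show "ennreal (gauss_lr \<sigma> m \<mu> \<mu>0 y) * indicator (PiE {..<m} A) y
        = (\<Prod>i<m. ennreal (normal_density (\<mu> i) \<sigma> (y i) / normal_density (\<mu>0 i) \<sigma> (y i)) * indicator (A i) (y i))"
        unfolding gauss_lr_def by (simp add: indicator_PiE_eq_prod prod.distrib prod_ennreal)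
    qed
    also have "\<dots> = (\<Prod>i<m. \<integral>\<^sup>+ t. ennreal (normal_density (\<mu> i) \<sigma> t / normal_density (\<mu>0 i) \<sigma> t)
                              * indicator (A i) t \<partial>?N \<mu>0 i)"
      by (rule P0.product_nn_integral_prod) auto
    also have "\<dots> = (\<Prod>i<m. emeasure (?N \<mu> i) (A i))"
      using assms by (intro prod.cong refl nn_integral_normal_density_ratio) auto
    finally show "emeasure (density (PiM {..<m} (?N \<mu>0)) (\<lambda>y. ennreal (gauss_lr \<sigma> m \<mu> \<mu>0 y))) (PiE {..<m} A)
      = (\<Prod>i\<in>{..<m}. emeasure (?N \<mu> i) (A i))" .
  qed simp
  then show ?thesis unfolding gauss_PiM_def by simp
qed

lemma normal_density_mult_divide:
  assumes "0 < \<sigma>"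
  shows "normal_density a \<sigma> t * normal_density b \<sigma> t / normal_density c \<sigma> t
     = exp ((a - c) * (b - c) / \<sigma>\<^sup>2) * normal_density (a + b - c) \<sigma> t"
proof -
  define q where "q = sqrt (2 * pi * \<sigma>\<^sup>2)"
  have "q > 0" using assms by (simp add: q_def)
  have exponents: "-(t - a)\<^sup>2 / (2 * \<sigma>\<^sup>2) + -(t - b)\<^sup>2 / (2 * \<sigma>\<^sup>2) - -(t - c)\<^sup>2 / (2 * \<sigma>\<^sup>2)
     = (a - c) * (b - c) / \<sigma>\<^sup>2 + -(t - (a + b - c))\<^sup>2 / (2 * \<sigma>\<^sup>2)"
    using assms by (simp add: field_simps power2_eq_square)
  have "normal_density a \<sigma> t * normal_density b \<sigma> t / normal_density c \<sigma> t
     = 1 / q * (exp (-(t - a)\<^sup>2 / (2 * \<sigma>\<^sup>2)) * exp (-(t - b)\<^sup>2 / (2 * \<sigma>\<^sup>2)) / exp (-(t - c)\<^sup>2 / (2 * \<sigma>\<^sup>2)))"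
  proof -
    have "\<And>X Y Z. Z \<noteq> 0 \<Longrightarrow> (1 / q * X) * (1 / q * Y) / (1 / q * Z) = 1 / q * (X * Y / Z)"
      using \<open>q > 0\<close> by (simp add: field_simps power2_eq_square)
    then show ?thesis unfolding normal_density_def q_def[symmetric] by simp
  qed
  also have "\<dots> = 1 / q * exp ((a - c) * (b - c) / \<sigma>\<^sup>2 + -(t - (a + b - c))\<^sup>2 / (2 * \<sigma>\<^sup>2))"
    unfolding exponents[symmetric] by (simp only: exp_add exp_diff)
  also have "\<dots> = exp ((a - c) * (b - c) / \<sigma>\<^sup>2) * normal_density (a + b - c) \<sigma> t"
    unfolding normal_density_def q_def[symmetric] by (simp only: exp_add) simp
  finally show ?thesis .
qed

lemma nn_integral_normal_density_ratio_mult: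
  assumes "0 < \<sigma>"
  shows "(\<integral>\<^sup>+ t. ennreal (normal_density a \<sigma> t / normal_density a0 \<sigma> t * (normal_density b \<sigma> t / normal_density a0 \<sigma> t))
            \<partial>density lborel (normal_density a0 \<sigma>))
       = ennreal (exp ((a - a0) * (b - a0) / \<sigma>\<^sup>2))"
proof -
  have "(\<integral>\<^sup>+ t. ennreal (normal_density a \<sigma> t / normal_density a0 \<sigma> t * (normal_density b \<sigma> t / normal_density a0 \<sigma> t))
            \<partial>density lborel (normal_density a0 \<sigma>))
      = (\<integral>\<^sup>+ t. ennreal (normal_density a0 \<sigma> t) * ennreal (normal_density a \<sigma> t / normal_density a0 \<sigma> t
            * (normal_density b \<sigma> t / normal_density a0 \<sigma> t)) \<partial>lborel)"
    by (intro nn_integral_density) auto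
  also have "\<dots> = (\<integral>\<^sup>+ t. ennreal (exp ((a - a0) * (b - a0) / \<sigma>\<^sup>2)) * ennreal (normal_density (a + b - a0) \<sigma> t) \<partial>lborel)"
  proof (intro nn_integral_cong)
    fix t
    have pos: "normal_density a0 \<sigma> t > 0" using assms by (rule normal_density_pos)
    then have "normal_density a0 \<sigma> t * (normal_density a \<sigma> t / normal_density a0 \<sigma> t
          * (normal_density b \<sigma> t / normal_density a0 \<sigma> t))
        = normal_density a \<sigma> t * normal_density b \<sigma> t / normal_density a0 \<sigma> t"
      by (simp add: field_simps power2_eq_square)
    also have "\<dots> = exp ((a - a0) * (b - a0) / \<sigma>\<^sup>2) * normal_density (a + b - a0) \<sigma> t"
      using assms by (rule normal_density_mult_divide)
    finally show "ennreal (normal_density a0 \<sigma> t) * ennreal (normal_density a \<sigma> t / normal_density a0 \<sigma> t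
          * (normal_density b \<sigma> t / normal_density a0 \<sigma> t))
        = ennreal (exp ((a - a0) * (b - a0) / \<sigma>\<^sup>2)) * ennreal (normal_density (a + b - a0) \<sigma> t)"
      using pos by (simp add: ennreal_mult[symmetric])
  qed
  also have "\<dots> = ennreal (exp ((a - a0) * (b - a0) / \<sigma>\<^sup>2))"
    using assms by (simp add: nn_integral_cmult nn_integral_eq_integral[of _ "normal_density _ \<sigma>"])
  finally show ?thesis .
qed

lemma has_bochner_integral_gauss_lr_mult:
  assumes "0 < \<sigma>"
  shows "has_bochner_integral (gauss_PiM \<sigma> m \<mu>0)
           (\<lambda>y. gauss_lr \<sigma> m \<mu> \<mu>0 y * gauss_lr \<sigma> m \<mu>' \<mu>0 y) (gauss_kernel \<sigma> m \<mu>0 \<mu> \<mu>')"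
proof (rule has_bochner_integral_nn_integral)
  interpret P0: product_sigma_finite "\<lambda>i. density lborel (normal_density (\<mu>0 i) \<sigma>)"
    using product_sigma_finite_normal_density[OF assms] .
  have "(\<integral>\<^sup>+ y. ennreal (gauss_lr \<sigma> m \<mu> \<mu>0 y * gauss_lr \<sigma> m \<mu>' \<mu>0 y) \<partial>gauss_PiM \<sigma> m \<mu>0)
    = (\<integral>\<^sup>+ y. (\<Prod>i<m. ennreal (normal_density (\<mu> i) \<sigma> (y i) / normal_density (\<mu>0 i) \<sigma> (y i)
          * (normal_density (\<mu>' i) \<sigma> (y i) / normal_density (\<mu>0 i) \<sigma> (y i)))) \<partial>gauss_PiM \<sigma> m \<mu>0)"
    unfolding gauss_lr_def by (intro nn_integral_cong) (simp add: prod_ennreal prod.distrib[symmetric])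
  also have "\<dots> = (\<Prod>i<m. \<integral>\<^sup>+ t. ennreal (normal_density (\<mu> i) \<sigma> t / normal_density (\<mu>0 i) \<sigma> t
          * (normal_density (\<mu>' i) \<sigma> t / normal_density (\<mu>0 i) \<sigma> t)) \<partial>density lborel (normal_density (\<mu>0 i) \<sigma>))"
    unfolding gauss_PiM_def by (rule P0.product_nn_integral_prod) auto
  also have "\<dots> = (\<Prod>i<m. ennreal (exp ((\<mu> i - \<mu>0 i) * (\<mu>' i - \<mu>0 i) / \<sigma>\<^sup>2)))"
    using assms by (intro prod.cong refl nn_integral_normal_density_ratio_mult)
  also have "\<dots> = ennreal (gauss_kernel \<sigma> m \<mu>0 \<mu> \<mu>')"
    by (simp add: gauss_kernel_def prod_ennreal exp_sum)
  finally show "(\<integral>\<^sup>+ y. ennreal (gauss_lr \<sigma> m \<mu> \<mu>0 y * gauss_lr \<sigma> m \<mu>' \<mu>0 y) \<partial>gauss_PiM \<sigma> m \<mu>0)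
    = ennreal (gauss_kernel \<sigma> m \<mu>0 \<mu> \<mu>')" .
qed (auto simp: gauss_lr_nonneg gauss_kernel_def)

lemma has_bochner_integral_gauss_lr:
  assumes "0 < \<sigma>"
  shows "has_bochner_integral (gauss_PiM \<sigma> m \<mu>0) (gauss_lr \<sigma> m \<mu> \<mu>0) 1"
proof -
  have "gauss_lr \<sigma> m \<mu>0 \<mu>0 y = 1" for y
    unfolding gauss_lr_def using normal_density_pos[OF assms, THEN less_imp_neq]
    by (intro prod.neutral) (metis div_self)
  then show ?thesis
    using has_bochner_integral_gauss_lr_mult[OF assms, of m \<mu>0 \<mu> \<mu>0] by (simp add: gauss_kernel_def)
qed

lemma gauss_lr_change_of_measure:
  assumes "0 < \<sigma>" and g: "g \<in> borel_measurable (PiM {..<m} (\<lambda>_. lborel))"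
    and "integrable (gauss_PiM \<sigma> m \<mu>) g"
  shows "integrable (gauss_PiM \<sigma> m \<mu>0) (\<lambda>y. gauss_lr \<sigma> m \<mu> \<mu>0 y * g y)"
    and "(\<integral>y. gauss_lr \<sigma> m \<mu> \<mu>0 y * g y \<partial>gauss_PiM \<sigma> m \<mu>0) = (\<integral>y. g y \<partial>gauss_PiM \<sigma> m \<mu>)"
proof -
  note density = gauss_PiM_eq_density[OF assms(1), of m \<mu> \<mu>0]
  have [measurable]: "g \<in> borel_measurable (gauss_PiM \<sigma> m \<mu>0)"
    "gauss_lr \<sigma> m \<mu> \<mu>0 \<in> borel_measurable (gauss_PiM \<sigma> m \<mu>0)"
    by (auto intro: borel_measurable_gauss_PiM g)
  show "integrable (gauss_PiM \<sigma> m \<mu>0) (\<lambda>y. gauss_lr \<sigma> m \<mu> \<mu>0 y * g y)"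
    using assms(3) unfolding density by (subst (asm) integrable_density) (auto simp: gauss_lr_nonneg)
  show "(\<integral>y. gauss_lr \<sigma> m \<mu> \<mu>0 y * g y \<partial>gauss_PiM \<sigma> m \<mu>0) = (\<integral>y. g y \<partial>gauss_PiM \<sigma> m \<mu>)"
    unfolding density by (subst integral_density) (auto simp: gauss_lr_nonneg)
qed

section \<open>A Barankin bound\<close>

lemma square_le_mult_if_quadratic_nonneg:
  fixes A B C :: real
  assumes quadratic: "\<And>l. 0 \<le> A - 2 * l * B + l\<^sup>2 * C" and "0 \<le> C"
  shows "B\<^sup>2 \<le> A * C"
proof (cases "C = 0")
  case True
  have "0 \<le> A - 2 * ((A + 1) / (2 * B)) * B + ((A + 1) / (2 * B))\<^sup>2 * C" by (rule quadratic)
  with True show ?thesis by (cases "B = 0") (simp_all add: field_simps)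
next
  case False
  with assms(2) have "C > 0" by simp
  have "0 \<le> A - 2 * (B / C) * B + (B / C)\<^sup>2 * C" by (rule quadratic)
  then have "0 \<le> (A - 2 * (B / C) * B + (B / C)\<^sup>2 * C) * C" using \<open>C > 0\<close> by simp
  also have "\<dots> = A * C - B\<^sup>2" using \<open>C > 0\<close> by (simp add: field_simps power2_eq_square)
  finally show ?thesis by simp
qed

lemma integral_mult_square_le:
  fixes f h :: "'a \<Rightarrow> real"
  assumes "integrable N (\<lambda>x. (f x)\<^sup>2)" "integrable N (\<lambda>x. (h x)\<^sup>2)" "integrable N (\<lambda>x. f x * h x)"
  shows "(\<integral>x. f x * h x \<partial>N)\<^sup>2 \<le> (\<integral>x. (f x)\<^sup>2 \<partial>N) * (\<integral>x. (h x)\<^sup>2 \<partial>N)"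
proof (rule square_le_mult_if_quadratic_nonneg)
  fix l :: real
  have "0 \<le> (\<integral>x. (f x - l * h x)\<^sup>2 \<partial>N)" by simp
  also have "(\<integral>x. (f x - l * h x)\<^sup>2 \<partial>N) = (\<integral>x. (f x)\<^sup>2 - 2 * l * (f x * h x) + l\<^sup>2 * (h x)\<^sup>2 \<partial>N)"
    by (intro Bochner_Integration.integral_cong refl) (simp add: power2_eq_square algebra_simps)
  also have "\<dots> = (\<integral>x. (f x)\<^sup>2 \<partial>N) - 2 * l * (\<integral>x. f x * h x \<partial>N) + l\<^sup>2 * (\<integral>x. (h x)\<^sup>2 \<partial>N)"
    using assms by simp
  finally show "0 \<le> (\<integral>x. (f x)\<^sup>2 \<partial>N) - 2 * l * (\<integral>x. f x * h x \<partial>N) + l\<^sup>2 * (\<integral>x. (h x)\<^sup>2 \<partial>N)" .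
qed simp

lemma barankin_bound:
  fixes \<nu> :: "nat \<Rightarrow> nat \<Rightarrow> real" and w :: "nat \<Rightarrow> real"
  assumes "0 < \<sigma>" and g: "g \<in> borel_measurable (PiM {..<m} (\<lambda>_. lborel))"
    and g0: "integrable (gauss_PiM \<sigma> m \<mu>0) g" "integrable (gauss_PiM \<sigma> m \<mu>0) (\<lambda>y. (g y)\<^sup>2)"
    and g\<nu>: "\<And>j. j < n \<Longrightarrow> integrable (gauss_PiM \<sigma> m (\<nu> j)) g" "integrable (gauss_PiM \<sigma> m \<nu>0) g"
  defines "m0 \<equiv> \<integral>y. g y \<partial>gauss_PiM \<sigma> m \<mu>0"
  defines "K \<equiv> gauss_kernel \<sigma> m \<mu>0"
  shows "(\<Sum>j<n. w j * ((\<integral>y. g y \<partial>gauss_PiM \<sigma> m (\<nu> j)) - (\<integral>y. g y \<partial>gauss_PiM \<sigma> m \<nu>0)))\<^sup>2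
     \<le> (\<integral>y. (g y - m0)\<^sup>2 \<partial>gauss_PiM \<sigma> m \<mu>0) *
        (\<Sum>j<n. \<Sum>j'<n. w j * w j' * (K (\<nu> j) (\<nu> j') - K (\<nu> j) \<nu>0 - K \<nu>0 (\<nu> j') + K \<nu>0 \<nu>0))"
proof -
  interpret prob_space "gauss_PiM \<sigma> m \<mu>0" using prob_space_gauss_PiM[OF assms(1)] .
  let ?L = "\<lambda>\<mu>. gauss_lr \<sigma> m \<mu> \<mu>0"
  define h where "h y = (\<Sum>j<n. w j * (?L (\<nu> j) y - ?L \<nu>0 y))" for y
  have LL: "integrable (gauss_PiM \<sigma> m \<mu>0) (\<lambda>y. ?L \<mu> y * ?L \<mu>' y)"
    "(\<integral>y. ?L \<mu> y * ?L \<mu>' y \<partial>gauss_PiM \<sigma> m \<mu>0) = K \<mu> \<mu>'" for \<mu> \<mu>'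
    using has_bochner_integral_gauss_lr_mult[OF assms(1)] unfolding K_def has_bochner_integral_iff by auto
  have L: "integrable (gauss_PiM \<sigma> m \<mu>0) (?L \<mu>)" "(\<integral>y. ?L \<mu> y \<partial>gauss_PiM \<sigma> m \<mu>0) = 1" for \<mu>
    using has_bochner_integral_gauss_lr[OF assms(1)] unfolding has_bochner_integral_iff by auto
  note gL = gauss_lr_change_of_measure[OF assms(1) g]
  have h_square: "(h y)\<^sup>2 = (\<Sum>j<n. \<Sum>j'<n. w j * w j' * (?L (\<nu> j) y * ?L (\<nu> j') y
      - ?L (\<nu> j) y * ?L \<nu>0 y - ?L \<nu>0 y * ?L (\<nu> j') y + ?L \<nu>0 y * ?L \<nu>0 y))" for y
    unfolding h_def power2_eq_square by (simp add: sum_product algebra_simps)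
  have g_mult_h: "(g y - m0) * h y = (\<Sum>j<n. w j * ((?L (\<nu> j) y * g y - m0 * ?L (\<nu> j) y)
       - (?L \<nu>0 y * g y - m0 * ?L \<nu>0 y)))" for y
    unfolding h_def by (simp add: sum_distrib_left algebra_simps)
  have "integrable (gauss_PiM \<sigma> m \<mu>0) (\<lambda>y. (g y)\<^sup>2 - 2 * m0 * g y + m0\<^sup>2)"
    using g0 by auto
  then have "integrable (gauss_PiM \<sigma> m \<mu>0) (\<lambda>y. (g y - m0)\<^sup>2)"
    by (simp add: power2_diff algebra_simps)
  moreover have "integrable (gauss_PiM \<sigma> m \<mu>0) (\<lambda>y. (h y)\<^sup>2)"
    unfolding h_square
    by (intro Bochner_Integration.integrable_sum integrable_mult_right
        Bochner_Integration.integrable_add Bochner_Integration.integrable_diff LL)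
  moreover have "integrable (gauss_PiM \<sigma> m \<mu>0) (\<lambda>y. (g y - m0) * h y)"
    unfolding g_mult_h using gL(1)[OF g\<nu>(1)] gL(1)[OF g\<nu>(2)] L
    by (intro Bochner_Integration.integrable_sum integrable_mult_right
        Bochner_Integration.integrable_diff) auto
  ultimately have "(\<integral>y. (g y - m0) * h y \<partial>gauss_PiM \<sigma> m \<mu>0)\<^sup>2
      \<le> (\<integral>y. (g y - m0)\<^sup>2 \<partial>gauss_PiM \<sigma> m \<mu>0) * (\<integral>y. (h y)\<^sup>2 \<partial>gauss_PiM \<sigma> m \<mu>0)"
    by (rule integral_mult_square_le)
  moreover have "(\<integral>y. (g y - m0) * h y \<partial>gauss_PiM \<sigma> m \<mu>0)
      = (\<Sum>j<n. w j * ((\<integral>y. g y \<partial>gauss_PiM \<sigma> m (\<nu> j)) - (\<integral>y. g y \<partial>gauss_PiM \<sigma> m \<nu>0)))"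
    unfolding g_mult_h using gL[OF g\<nu>(1)] gL[OF g\<nu>(2)] L
    by (simp add: integral_sum integrable_sum integrable_mult_right)
  moreover have "(\<integral>y. (h y)\<^sup>2 \<partial>gauss_PiM \<sigma> m \<mu>0)
      = (\<Sum>j<n. \<Sum>j'<n. w j * w j' * (K (\<nu> j) (\<nu> j') - K (\<nu> j) \<nu>0 - K \<nu>0 (\<nu> j') + K \<nu>0 \<nu>0))"
    unfolding h_square using LL by (simp add: integrable_mult_right integral_sum integrable_sum)
  ultimately show ?thesis by simp
qed

section \<open>Restricted isometry\<close>

lemma scalar_prod_self_eq_sum_squares: "v \<bullet> v = (\<Sum>i<dim_vec v. (v $ i)\<^sup>2)" for v :: "real vec"
  unfolding scalar_prod_def by (simp add: power2_eq_square atLeast0LessThan)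

lemma scalar_prod_self_nonneg: "0 \<le> v \<bullet> (v :: real vec)"
  unfolding scalar_prod_self_eq_sum_squares by (intro sum_nonneg) auto

lemma scalar_prod_self_eq_0D: "v \<bullet> v = 0 \<Longrightarrow> v \<in> carrier_vec n \<Longrightarrow> v = 0\<^sub>v n" for v :: "real vec"
  unfolding scalar_prod_self_eq_sum_squares by (intro eq_vecI) (auto simp: sum_nonneg_eq_0_iff)

lemma scalar_prod_mult_mat_vec_le:
  fixes H :: "real mat"
  assumes H: "H \<in> carrier_mat M N" and z: "z \<in> carrier_vec N"
  shows "(H *\<^sub>v z) \<bullet> (H *\<^sub>v z) \<le> (\<Sum>i<M. \<Sum>j<N. (H $$ (i, j))\<^sup>2) * (z \<bullet> z)"
proof -
  have "(H *\<^sub>v z) \<bullet> (H *\<^sub>v z) = (\<Sum>i<M. (\<Sum>j<N. H $$ (i, j) * z $ j)\<^sup>2)"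
    using H z unfolding scalar_prod_self_eq_sum_squares
    by (simp add: mult_mat_vec_def scalar_prod_def atLeast0LessThan)
  also have "\<dots> \<le> (\<Sum>i<M. (\<Sum>j<N. (H $$ (i, j))\<^sup>2) * (\<Sum>j<N. (z $ j)\<^sup>2))"
    by (intro sum_mono Cauchy_Schwarz_ineq_sum)
  also have "\<dots> = (\<Sum>i<M. \<Sum>j<N. (H $$ (i, j))\<^sup>2) * (z \<bullet> z)"
    using z unfolding scalar_prod_self_eq_sum_squares by (simp add: sum_distrib_right)
  finally show ?thesis .
qed

definition rip_bounds :: "real mat \<Rightarrow> nat \<Rightarrow> real set" where
  "rip_bounds H K = {\<delta>. \<delta> \<ge> 0 \<and>
     (\<forall>I. I \<subseteq> {..<dim_col H} \<and> card I = K \<longrightarrow>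
        (\<forall>z \<in> carrier_vec (dim_col H). (\<forall>i<dim_col H. i \<notin> I \<longrightarrow> z $ i = 0) \<longrightarrow>
           (1 - \<delta>) * (z \<bullet> z) \<le> (H *\<^sub>v z) \<bullet> (H *\<^sub>v z) \<and>
           (H *\<^sub>v z) \<bullet> (H *\<^sub>v z) \<le> (1 + \<delta>) * (z \<bullet> z)))}"

lemma rip_const_eq_Inf_rip_bounds: "rip_const H K = Inf (rip_bounds H K)"
  unfolding rip_const_def rip_bounds_def ..

lemma Frobenius_mem_rip_bounds:
  assumes H: "H \<in> carrier_mat M N"
  shows "max 1 (\<Sum>i<M. \<Sum>j<N. (H $$ (i, j))\<^sup>2) \<in> rip_bounds H K"
proof -
  let ?F = "\<Sum>i<M. \<Sum>j<N. (H $$ (i, j))\<^sup>2"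
  have "(1 - max 1 ?F) * (z \<bullet> z) \<le> 0" for z :: "real vec"
    by (intro mult_nonpos_nonneg scalar_prod_self_nonneg) auto
  moreover have "(H *\<^sub>v z) \<bullet> (H *\<^sub>v z) \<le> (1 + max 1 ?F) * (z \<bullet> z)" if "z \<in> carrier_vec N" for z
    using scalar_prod_mult_mat_vec_le[OF H that] mult_right_mono[OF _ scalar_prod_self_nonneg, of ?F "1 + max 1 ?F" z]
    by linarith
  ultimately show ?thesis
    using H scalar_prod_self_nonneg unfolding rip_bounds_def by (auto intro: order_trans)
qed

lemma exists_superset_with_card:
  assumes "finite A" "I \<subseteq> A" "card I \<le> n" "n \<le> card A"
  shows "\<exists>J. I \<subseteq> J \<and> J \<subseteq> A \<and> card J = n"
proof -
  have "finite I" using assms(1,2) finite_subset by blast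
  have "n - card I \<le> card (A - I)" using assms \<open>finite I\<close> by (simp add: card_Diff_subset)
  then obtain T where T: "T \<subseteq> A - I" "card T = n - card I" "finite T"
    by (rule obtain_subset_with_card_n)
  then have "card (I \<union> T) = n"
    using assms(3) \<open>finite I\<close> by (subst card_Un_disjoint) auto
  with T assms(2) show ?thesis by (intro exI[of _ "I \<union> T"]) auto
qed

text \<open>The infimum defining the RIP constant is attained, since the admissible constants form a
  closed set; and supports of size below the order are padded up to it.\<close>
lemma rip_const_bounds:
  fixes H :: "real mat"
  assumes H: "H \<in> carrier_mat M N" and "S \<le> N"
    and I: "I \<subseteq> {..<N}" "card I \<le> S"
    and z: "z \<in> carrier_vec N" "\<And>i. i < N \<Longrightarrow> i \<notin> I \<Longrightarrow> z $ i = 0"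
  shows "(1 - rip_const H S) * (z \<bullet> z) \<le> (H *\<^sub>v z) \<bullet> (H *\<^sub>v z)"
    and "(H *\<^sub>v z) \<bullet> (H *\<^sub>v z) \<le> (1 + rip_const H S) * (z \<bullet> z)"
proof -
  obtain J where J: "I \<subseteq> J" "J \<subseteq> {..<N}" "card J = S"
    using exists_superset_with_card[of "{..<N}" I S] I \<open>S \<le> N\<close> by auto
  define C where "C = {\<delta>. (1 - \<delta>) * (z \<bullet> z) \<le> (H *\<^sub>v z) \<bullet> (H *\<^sub>v z)
                         \<and> (H *\<^sub>v z) \<bullet> (H *\<^sub>v z) \<le> (1 + \<delta>) * (z \<bullet> z)}"
  have "rip_bounds H S \<subseteq> C"
  proof
    fix \<delta> assume "\<delta> \<in> rip_bounds H S"
    moreover have "\<forall>i<N. i \<notin> J \<longrightarrow> z $ i = 0" using z(2) J(1) by auto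
    ultimately show "\<delta> \<in> C" using H J z(1) unfolding rip_bounds_def C_def by auto
  qed
  moreover have "closed C" unfolding C_def
    by (intro closed_Collect_conj closed_Collect_le continuous_intros)
  ultimately have "closure (rip_bounds H S) \<subseteq> C" by (rule closure_minimal)
  moreover have "rip_const H S \<in> closure (rip_bounds H S)"
  proof -
    have "rip_bounds H S \<noteq> {}" using Frobenius_mem_rip_bounds[OF H] by blast
    moreover have "bdd_below (rip_bounds H S)"
      unfolding rip_bounds_def by (rule bdd_belowI[of _ 0]) auto
    ultimately show ?thesis unfolding rip_const_eq_Inf_rip_bounds by (rule closure_contains_Inf)
  qed
  ultimately show "(1 - rip_const H S) * (z \<bullet> z) \<le> (H *\<^sub>v z) \<bullet> (H *\<^sub>v z)"
    and "(H *\<^sub>v z) \<bullet> (H *\<^sub>v z) \<le> (1 + rip_const H S) * (z \<bullet> z)"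
    unfolding C_def by auto
qed

section \<open>Vectors supported on a list of columns\<close>

lemma sparse_setI:
  assumes "x \<in> carrier_vec N" "supp_vec x \<subseteq> A" "finite A" "card A \<le> S"
  shows "x \<in> sparse_set N S"
  using assms card_mono[OF assms(3,2)] unfolding sparse_set_def by auto

lemma supp_vec_add_smult_unit_vec_subset:
  assumes "x \<in> carrier_vec N" "supp_vec x \<subseteq> A" "l \<in> A"
  shows "supp_vec (x + t \<cdot>\<^sub>v unit_vec N l) \<subseteq> A"
proof
  fix i assume "i \<in> supp_vec (x + t \<cdot>\<^sub>v unit_vec N l)"
  then have "i < N" "x $ i + t * unit_vec N l $ i \<noteq> 0" using assms(1) unfolding supp_vec_def by auto
  then show "i \<in> A" using assms by (cases "i = l") (auto simp: supp_vec_def unit_vec_def)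
qed

definition embed_vec :: "nat \<Rightarrow> nat list \<Rightarrow> real vec \<Rightarrow> real vec" where
  "embed_vec N ks z = vec N (\<lambda>j. if j \<in> set ks then z $ (THE i. i < length ks \<and> ks ! i = j) else 0)"

definition select_vec :: "nat list \<Rightarrow> real vec \<Rightarrow> real vec" where
  "select_vec ks x = vec (length ks) (\<lambda>i. x $ (ks ! i))"

lemma embed_vec_carrier [simp]: "embed_vec N ks z \<in> carrier_vec N"
  by (simp add: embed_vec_def)

lemma dim_embed_vec [simp]: "dim_vec (embed_vec N ks z) = N"
  by (simp add: embed_vec_def)

lemma embed_vec_outside: "j < N \<Longrightarrow> j \<notin> set ks \<Longrightarrow> embed_vec N ks z $ j = 0"
  by (simp add: embed_vec_def)

lemma supp_vec_embed_vec: "supp_vec (embed_vec N ks z) \<subseteq> set ks"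
  unfolding supp_vec_def embed_vec_def by (auto split: if_splits)

lemma embed_vec_nth:
  assumes "distinct ks" "set ks \<subseteq> {..<N}" "i < length ks"
  shows "embed_vec N ks z $ (ks ! i) = z $ i"
proof -
  have "(THE i'. i' < length ks \<and> ks ! i' = ks ! i) = i"
    using assms by (intro the_equality) (auto simp: nth_eq_iff_index_eq)
  moreover have "ks ! i < N" using assms(2,3) nth_mem by blast
  ultimately show ?thesis using assms(3) by (simp add: embed_vec_def)
qed

lemma select_embed_vec:
  "distinct ks \<Longrightarrow> set ks \<subseteq> {..<N} \<Longrightarrow> z \<in> carrier_vec (length ks) \<Longrightarrow> select_vec ks (embed_vec N ks z) = z"
  by (intro eq_vecI) (auto simp: select_vec_def embed_vec_nth)

lemma mult_mat_vec_eq_col_submat: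
  fixes H :: "real mat"
  assumes H: "H \<in> carrier_mat M N" and ks: "distinct ks" "set ks \<subseteq> {..<N}"
    and x: "x \<in> carrier_vec N" "\<And>j. j < N \<Longrightarrow> j \<notin> set ks \<Longrightarrow> x $ j = 0"
  shows "H *\<^sub>v x = col_submat H ks *\<^sub>v select_vec ks x"
proof (rule eq_vecI)
  fix i assume "i < dim_vec (col_submat H ks *\<^sub>v select_vec ks x)"
  then have i: "i < M" using H by (simp add: col_submat_def)
  have "(H *\<^sub>v x) $ i = (\<Sum>j\<in>{0..<N}. H $$ (i, j) * x $ j)"
    using H x i by (simp add: scalar_prod_def)
  also have "\<dots> = (\<Sum>j\<in>set ks. H $$ (i, j) * x $ j)"
    using ks x by (intro sum.mono_neutral_right) auto
  also have "set ks = (\<lambda>j. ks ! j) ` {0..<length ks}" by (auto simp: set_conv_nth)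
  also have "(\<Sum>j\<in>(\<lambda>j. ks ! j) ` {0..<length ks}. H $$ (i, j) * x $ j)
      = (\<Sum>j\<in>{0..<length ks}. H $$ (i, ks ! j) * x $ (ks ! j))"
    using ks(1) by (intro sum.reindex[unfolded comp_def]) (auto intro: inj_on_nth)
  also have "\<dots> = (col_submat H ks *\<^sub>v select_vec ks x) $ i"
    using H i by (simp add: col_submat_def select_vec_def scalar_prod_def)
  finally show "(H *\<^sub>v x) $ i = (col_submat H ks *\<^sub>v select_vec ks x) $ i" .
qed (use H in \<open>simp add: col_submat_def\<close>)

lemma mult_mat_vec_embed_vec:
  fixes H :: "real mat"
  assumes "H \<in> carrier_mat M N" "distinct ks" "set ks \<subseteq> {..<N}" "z \<in> carrier_vec (length ks)"
  shows "H *\<^sub>v embed_vec N ks z = col_submat H ks *\<^sub>v z"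
  using mult_mat_vec_eq_col_submat[OF assms(1-3) embed_vec_carrier] select_embed_vec[OF assms(2-4)]
  by (simp add: embed_vec_outside)

lemma mult_mat_vec_add_smult_unit_vec:
  fixes H :: "real mat"
  assumes H: "H \<in> carrier_mat M N" and x: "x \<in> carrier_vec N" and "l < N" "i < M"
  shows "(H *\<^sub>v (x + t \<cdot>\<^sub>v unit_vec N l)) $ i = (H *\<^sub>v x) $ i + t * H $$ (i, l)"
proof -
  have "(H *\<^sub>v unit_vec N l) $ i = (\<Sum>j\<in>{0..<N}. H $$ (i, j) * (if j = l then 1 else 0))"
    using assms by (simp add: scalar_prod_def)
  also have "\<dots> = H $$ (i, l)" using \<open>l < N\<close> by (simp add: if_distrib cong: if_cong)
  finally show ?thesis
    using assms by (simp add: mult_add_distrib_mat_vec[OF H] mult_mat_vec[OF H])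
qed

section \<open>Inverse and pseudoinverse\<close>

lemma inv_mat_eqI:
  fixes A B :: "real mat"
  assumes A: "A \<in> carrier_mat n n" and B: "B \<in> carrier_mat n n" and AB: "A * B = 1\<^sub>m n"
  shows "inv_mat A = B"
  unfolding inv_mat_def
proof (rule the_equality)
  show "B \<in> carrier_mat (dim_row A) (dim_row A) \<and> A * B = 1\<^sub>m (dim_row A) \<and> B * A = 1\<^sub>m (dim_row A)"
    using A B AB mat_mult_left_right_inverse[OF A B AB] by simp
  fix C assume C: "C \<in> carrier_mat (dim_row A) (dim_row A) \<and> A * C = 1\<^sub>m (dim_row A) \<and> C * A = 1\<^sub>m (dim_row A)"
  then have "C \<in> carrier_mat n n" using A by simp
  then have "C = C * (A * B)" using AB by simp
  also have "\<dots> = (C * A) * B" using A B C by (intro assoc_mult_mat[symmetric]) auto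
  also have "\<dots> = B" using A B C by simp
  finally show "C = B" .
qed

text \<open>Any solution B of the Penrose equations satisfies K^T = K^T K B, so for K of full column
  rank it is determined as (K^T K)^-1 K^T.\<close>
lemma pinv_mat_eq_gram_inverse:
  fixes K G :: "real mat"
  assumes K: "K \<in> carrier_mat m n" and G: "G \<in> carrier_mat n n"
    and GK: "G * (transpose_mat K * K) = 1\<^sub>m n"
  shows "pinv_mat K = G * transpose_mat K"
proof -
  define T where "T = transpose_mat K"
  have T: "T \<in> carrier_mat n m" using K by (simp add: T_def)
  have KG: "(T * K) * G = 1\<^sub>m n"
    using mat_mult_left_right_inverse[OF G _ GK] K unfolding T_def by auto
  have "transpose_mat ((T * K) * G) = transpose_mat G * transpose_mat (T * K)"
    using T K G by (intro transpose_mult) auto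
  moreover have "transpose_mat (T * K) = T * K" using T K by (simp add: transpose_mult T_def)
  ultimately have "transpose_mat G * (T * K) = 1\<^sub>m n" using KG by simp
  then have G_sym: "transpose_mat G = G"
    using inv_mat_eqI[of "T * K" n G] inv_mat_eqI[of "T * K" n "transpose_mat G"] K T G KG
      mat_mult_left_right_inverse[of "transpose_mat G" n "T * K"] by auto
  have B0: "G * T \<in> carrier_mat n m" using G T by simp
  have GTK: "G * T * K = 1\<^sub>m n" using GK unfolding T_def[symmetric] by (simp add: assoc_mult_mat[OF G T K])
  show ?thesis
    unfolding pinv_mat_def T_def[symmetric]
  proof (rule the_equality)
    have "K * (G * T) * K = K" using GTK K B0 by (simp add: assoc_mult_mat[OF K B0 K])
    moreover have "G * T * K * (G * T) = G * T" using GTK left_mult_one_mat[OF B0] by simp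
    moreover have "transpose_mat (K * (G * T)) = K * (G * T)"
    proof -
      have "transpose_mat (K * (G * T)) = transpose_mat T * transpose_mat G * transpose_mat K"
        using K G T by (simp add: transpose_mult[OF K B0] transpose_mult[OF G T])
      also have "\<dots> = K * G * T" using G_sym by (simp add: T_def)
      finally show ?thesis by (simp add: assoc_mult_mat[OF K G T])
    qed
    ultimately show "G * T \<in> carrier_mat (dim_col K) (dim_row K) \<and> K * (G * T) * K = K \<and>
        G * T * K * (G * T) = G * T \<and> transpose_mat (K * (G * T)) = K * (G * T) \<and>
        transpose_mat (G * T * K) = G * T * K"
      using B0 K GTK by simp
    fix B assume B: "B \<in> carrier_mat (dim_col K) (dim_row K) \<and> K * B * K = K \<and> B * K * B = B \<and>
      transpose_mat (K * B) = K * B \<and> transpose_mat (B * K) = B * K"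
    then have Bc: "B \<in> carrier_mat n m" using K by auto
    have "T = transpose_mat (K * B * K)" using B by (simp add: T_def)
    also have "\<dots> = T * transpose_mat (K * B)" unfolding T_def using K Bc by (intro transpose_mult) auto
    also have "\<dots> = T * (K * B)" using B by simp
    finally have "G * T = G * (T * (K * B))" by simp
    also have "\<dots> = (G * T * K) * B"
      using assoc_mult_mat[OF T K Bc] assoc_mult_mat[OF G T K] assoc_mult_mat[OF G _ Bc, of "T * K"] T K
      by simp
    also have "\<dots> = B" using GTK Bc by simp
    finally show "B = G * T" by simp
  qed
qed

lemma tendsto_exp_square_quotient: "((\<lambda>t::real. (exp (t\<^sup>2 * c) - 1) / t\<^sup>2) \<longlongrightarrow> c) (at 0)"
proof -
  have "((\<lambda>s. exp (s * c)) has_field_derivative exp (0 * c) * c) (at 0)"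
    by (auto intro!: derivative_eq_intros)
  then have "((\<lambda>s. (exp (s * c) - 1) / s) \<longlongrightarrow> c) (at 0)"
    unfolding has_field_derivative_iff by simp
  moreover have "filterlim (\<lambda>t::real. t\<^sup>2) (at 0) (at 0)"
  proof (rule filterlim_atI)
    show "((\<lambda>t::real. t\<^sup>2) \<longlongrightarrow> 0) (at 0)" by (auto intro!: tendsto_eq_intros)
    show "\<forall>\<^sub>F t in at (0::real). t\<^sup>2 \<noteq> 0" by (simp add: eventually_at_filter)
  qed
  ultimately show ?thesis using filterlim_compose by (force simp: comp_def)
qed

lemma tendsto_partial_at:
  assumes "has_partial_at c x l"
  shows "((\<lambda>t. (c (x + t \<cdot>\<^sub>v unit_vec (dim_vec x) l) - c x) / t) \<longlongrightarrow> partial_at c x l) (at 0)"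
proof -
  define f where "f t = c (x + t \<cdot>\<^sub>v unit_vec (dim_vec x) l)" for t
  have "(f has_field_derivative deriv f 0) (at 0)"
    using assms unfolding has_partial_at_def f_def by (simp add: DERIV_deriv_iff_real_differentiable)
  then have "((\<lambda>t. (f t - f 0) / t) \<longlongrightarrow> deriv f 0) (at 0)"
    unfolding has_field_derivative_iff by simp
  moreover have "x + 0 \<cdot>\<^sub>v unit_vec (dim_vec x) l = x" by (intro eq_vecI) auto
  ultimately show ?thesis unfolding partial_at_def f_def by simp
qed

lemma exp_scaled_le_of_square_le:
  fixes q V U U' \<sigma> :: real
  assumes "0 \<le> q" "0 \<le> V" "q\<^sup>2 \<le> V * (exp U * (q / \<sigma>\<^sup>2))" "U \<le> U'" "\<sigma> \<noteq> 0"
  shows "exp (- U') * \<sigma>\<^sup>2 * q \<le> V"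
proof (cases "q = 0")
  case False
  have "V * (exp U * (q / \<sigma>\<^sup>2)) = (V * exp U / \<sigma>\<^sup>2) * q" by simp
  with assms(3) have "q * q \<le> (V * exp U / \<sigma>\<^sup>2) * q" by (simp only: power2_eq_square)
  moreover have "0 < q" using False assms(1) by simp
  ultimately have "q \<le> V * exp U / \<sigma>\<^sup>2" by (rule mult_right_le_imp_le)
  then have "exp (- U) * \<sigma>\<^sup>2 * q \<le> V" using assms(5) by (simp add: field_simps exp_minus)
  moreover have "exp (- U') * \<sigma>\<^sup>2 * q \<le> exp (- U) * \<sigma>\<^sup>2 * q"
    using assms(1,4) by (intro mult_right_mono) auto
  ultimately show ?thesis by linarith
qed (use assms in simp)

section \<open>Projection onto the span of the columns\<close>

locale rip_columns =
  fixes H :: "real mat" and M N S :: nat and ks :: "nat list"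
  assumes H: "H \<in> carrier_mat M N" and S_le_N: "S \<le> N" and distinct_ks: "distinct ks"
    and set_ks: "set ks \<subseteq> {..<N}" and length_ks: "length ks \<le> S" and rip: "rip_const H S < 1"
begin

abbreviation HK :: "real mat" where "HK \<equiv> col_submat H ks"

lemma nth_ks_less: "i < length ks \<Longrightarrow> ks ! i < N"
  using set_ks nth_mem by blast

lemma col_submat_dims [simp]: "dim_row HK = M" "dim_col HK = length ks"
  using H by (simp_all add: col_submat_def)

lemma col_submat_carrier [simp]: "HK \<in> carrier_mat M (length ks)"
  by (simp add: carrier_matI)

lemma transpose_col_submat_carrier [simp]: "transpose_mat HK \<in> carrier_mat (length ks) M"
  by simp

lemma mult_mat_vec_carriers [simp]:
  "x \<in> carrier_vec N \<Longrightarrow> H *\<^sub>v x \<in> carrier_vec M"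
  "a \<in> carrier_vec (length ks) \<Longrightarrow> HK *\<^sub>v a \<in> carrier_vec M"
  "y \<in> carrier_vec M \<Longrightarrow> transpose_mat HK *\<^sub>v y \<in> carrier_vec (length ks)"
  by (auto intro: mult_mat_vec_carrier[OF H] mult_mat_vec_carrier[OF col_submat_carrier]
      mult_mat_vec_carrier[OF transpose_col_submat_carrier])

lemma col_submat_nth: "i < M \<Longrightarrow> j < length ks \<Longrightarrow> HK $$ (i, j) = H $$ (i, ks ! j)"
  using H by (simp add: col_submat_def)

lemma mult_embed_vec: "z \<in> carrier_vec (length ks) \<Longrightarrow> H *\<^sub>v embed_vec N ks z = HK *\<^sub>v z"
  by (rule mult_mat_vec_embed_vec[OF H distinct_ks set_ks])

lemma mult_mat_vec_inj_on_supp_ks: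
  assumes x: "x \<in> carrier_vec N" "supp_vec x \<subseteq> set ks"
    and x': "x' \<in> carrier_vec N" "supp_vec x' \<subseteq> set ks"
    and eq: "H *\<^sub>v x = H *\<^sub>v x'"
  shows "x = x'"
proof -
  define z where "z = x - x'"
  have z: "z \<in> carrier_vec N" "\<And>i. i < N \<Longrightarrow> i \<notin> set ks \<Longrightarrow> z $ i = 0"
    using x x' unfolding z_def supp_vec_def by (force simp: subset_iff)+
  have "(1 - rip_const H S) * (z \<bullet> z) \<le> (H *\<^sub>v z) \<bullet> (H *\<^sub>v z)"
    using rip_const_bounds(1)[OF H S_le_N set_ks _ z] length_ks by (simp add: distinct_card[OF distinct_ks])
  also have "H *\<^sub>v z = 0\<^sub>v M"
    using x x' eq unfolding z_def by (simp add: mult_minus_distrib_mat_vec[OF H])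
  finally have "z \<bullet> z = 0"
    using rip scalar_prod_self_nonneg[of z] by (simp add: mult_le_0_iff)
  then have "z = 0\<^sub>v N" using z(1) by (rule scalar_prod_self_eq_0D)
  show ?thesis
  proof (rule eq_vecI)
    fix i assume "i < dim_vec x'"
    then have "i < N" using x' by simp
    then have "z $ i = 0" using \<open>z = 0\<^sub>v N\<close> by simp
    then show "x $ i = x' $ i" using x x' \<open>i < N\<close> unfolding z_def by simp
  qed (use x x' in simp)
qed

lemma col_submat_inj:
  assumes a: "a \<in> carrier_vec (length ks)" and "HK *\<^sub>v a = 0\<^sub>v M"
  shows "a = 0\<^sub>v (length ks)"
proof -
  have "embed_vec N ks a = 0\<^sub>v N"
  proof (rule mult_mat_vec_inj_on_supp_ks)
    have "H *\<^sub>v 0\<^sub>v N = 0\<^sub>v M" using H by (intro eq_vecI) auto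
    then show "H *\<^sub>v embed_vec N ks a = H *\<^sub>v 0\<^sub>v N" using assms by (simp add: mult_embed_vec)
  qed (auto simp: supp_vec_embed_vec supp_vec_def[of "0\<^sub>v N"])
  then show ?thesis
    using select_embed_vec[OF distinct_ks set_ks a] by (auto simp: select_vec_def nth_ks_less)
qed

definition gram :: "real mat" where "gram = transpose_mat HK * HK"

lemma gram_carrier [simp]: "gram \<in> carrier_mat (length ks) (length ks)"
  unfolding gram_def by (rule mult_carrier_mat[OF transpose_col_submat_carrier col_submat_carrier])

lemma gram_nth:
  "j < length ks \<Longrightarrow> j' < length ks \<Longrightarrow> gram $$ (j, j') = (\<Sum>i<M. HK $$ (i, j) * HK $$ (i, j'))"
  unfolding gram_def by (simp add: scalar_prod_def atLeast0LessThan)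

lemma mult_gram_vec: "a \<in> carrier_vec (length ks) \<Longrightarrow> gram *\<^sub>v a = transpose_mat HK *\<^sub>v (HK *\<^sub>v a)"
  unfolding gram_def by (rule assoc_mult_mat_vec[OF transpose_col_submat_carrier col_submat_carrier])

lemma scalar_prod_gram:
  assumes a: "a \<in> carrier_vec (length ks)"
  shows "a \<bullet> (gram *\<^sub>v a) = (HK *\<^sub>v a) \<bullet> (HK *\<^sub>v a)"
  unfolding mult_gram_vec[OF a]
  using a by (subst comm_scalar_prod[of _ "length ks"]) (auto intro: transpose_vec_mult_scalar[OF col_submat_carrier])

lemma scalar_prod_gram_sum:
  assumes "a \<in> carrier_vec (length ks)"
  shows "a \<bullet> (gram *\<^sub>v a) = (\<Sum>j<length ks. \<Sum>j'<length ks. a $ j * a $ j' * gram $$ (j, j'))"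
  using assms carrier_matD[OF gram_carrier]
  by (auto simp: scalar_prod_def atLeast0LessThan sum_distrib_left algebra_simps intro!: sum.cong)

lemma gram_det_nonzero: "det gram \<noteq> 0"
proof
  assume "det gram = 0"
  then obtain a where a: "a \<in> carrier_vec (length ks)" "a \<noteq> 0\<^sub>v (length ks)" "gram *\<^sub>v a = 0\<^sub>v (length ks)"
    using det_0_iff_vec_prod_zero[OF gram_carrier] by blast
  then have "(HK *\<^sub>v a) \<bullet> (HK *\<^sub>v a) = 0" using scalar_prod_gram[OF a(1)] by simp
  then have "HK *\<^sub>v a = 0\<^sub>v M" by (rule scalar_prod_self_eq_0D) (use a in simp)
  with a show False using col_submat_inj by blast
qed

lemma inv_gram:
  shows "inv_mat gram \<in> carrier_mat (length ks) (length ks)"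
    and "gram * inv_mat gram = 1\<^sub>m (length ks)" and "inv_mat gram * gram = 1\<^sub>m (length ks)"
proof -
  obtain B where B: "B \<in> carrier_mat (length ks) (length ks)" "gram * B = 1\<^sub>m (length ks)"
    using det_non_zero_imp_unit[OF gram_carrier gram_det_nonzero]
    unfolding Units_def ring_mat_def by auto
  then have "inv_mat gram = B" by (intro inv_mat_eqI[OF gram_carrier])
  with B show "inv_mat gram \<in> carrier_mat (length ks) (length ks)"
    and "gram * inv_mat gram = 1\<^sub>m (length ks)" and "inv_mat gram * gram = 1\<^sub>m (length ks)"
    using mat_mult_left_right_inverse[OF gram_carrier] by auto
qed

definition ls_coeffs :: "real vec \<Rightarrow> real vec" where
  "ls_coeffs x0 = inv_mat gram *\<^sub>v (transpose_mat HK *\<^sub>v (H *\<^sub>v x0))"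

lemma ls_coeffs_carrier [simp]: "x0 \<in> carrier_vec N \<Longrightarrow> ls_coeffs x0 \<in> carrier_vec (length ks)"
  unfolding ls_coeffs_def using inv_gram(1) by simp

lemma mult_col_submat_ls_coeffs:
  assumes "x0 \<in> carrier_vec N"
  shows "HK *\<^sub>v ls_coeffs x0 = (HK * pinv_mat HK) *\<^sub>v (H *\<^sub>v x0)"
proof -
  have P: "pinv_mat HK = inv_mat gram * transpose_mat HK"
    using pinv_mat_eq_gram_inverse[OF col_submat_carrier inv_gram(1)] inv_gram(3) by (simp add: gram_def)
  have "(HK * pinv_mat HK) *\<^sub>v (H *\<^sub>v x0) = HK *\<^sub>v ((inv_mat gram * transpose_mat HK) *\<^sub>v (H *\<^sub>v x0))"
    unfolding P using assms inv_gram(1) by (intro assoc_mult_mat_vec[of _ M "length ks"]) auto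
  also have "(inv_mat gram * transpose_mat HK) *\<^sub>v (H *\<^sub>v x0) = ls_coeffs x0"
    unfolding ls_coeffs_def using assms by (intro assoc_mult_mat_vec[OF inv_gram(1)]) auto
  finally show ?thesis by simp
qed

lemma projection_eq_embed_ls_coeffs:
  assumes x0: "x0 \<in> carrier_vec N"
  shows "(THE x. x \<in> carrier_vec N \<and> supp_vec x \<subseteq> set ks \<and> H *\<^sub>v x = (HK * pinv_mat HK) *\<^sub>v (H *\<^sub>v x0))
       = embed_vec N ks (ls_coeffs x0)"
proof (rule the_equality)
  let ?xt = "embed_vec N ks (ls_coeffs x0)"
  have H_xt: "H *\<^sub>v ?xt = (HK * pinv_mat HK) *\<^sub>v (H *\<^sub>v x0)"
    using mult_embed_vec[OF ls_coeffs_carrier[OF x0]] mult_col_submat_ls_coeffs[OF x0] by simp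
  then show "?xt \<in> carrier_vec N \<and> supp_vec ?xt \<subseteq> set ks \<and> H *\<^sub>v ?xt = (HK * pinv_mat HK) *\<^sub>v (H *\<^sub>v x0)"
    using supp_vec_embed_vec embed_vec_carrier by blast
  fix x assume x: "x \<in> carrier_vec N \<and> supp_vec x \<subseteq> set ks \<and> H *\<^sub>v x = (HK * pinv_mat HK) *\<^sub>v (H *\<^sub>v x0)"
  show "x = ?xt"
  proof (rule mult_mat_vec_inj_on_supp_ks)
    show "H *\<^sub>v x = H *\<^sub>v ?xt" using x H_xt by (simp only:)
  qed (use x supp_vec_embed_vec embed_vec_carrier in blast)+
qed

definition residual :: "real vec \<Rightarrow> real vec" where
  "residual x0 = H *\<^sub>v embed_vec N ks (ls_coeffs x0) - H *\<^sub>v x0"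

lemma residual_nth:
  "x0 \<in> carrier_vec N \<Longrightarrow> i < M \<Longrightarrow> residual x0 $ i = (H *\<^sub>v embed_vec N ks (ls_coeffs x0)) $ i - (H *\<^sub>v x0) $ i"
  unfolding residual_def using H by simp

lemma residual_orthogonal:
  assumes x0: "x0 \<in> carrier_vec N" and j: "j < length ks"
  shows "(\<Sum>i<M. HK $$ (i, j) * residual x0 $ i) = 0"
proof -
  have "transpose_mat HK *\<^sub>v (H *\<^sub>v embed_vec N ks (ls_coeffs x0)) = gram *\<^sub>v ls_coeffs x0"
    using x0 by (simp add: mult_embed_vec mult_gram_vec)
  also have "\<dots> = (gram * inv_mat gram) *\<^sub>v (transpose_mat HK *\<^sub>v (H *\<^sub>v x0))"
    unfolding ls_coeffs_def using x0 inv_gram(1) by (intro assoc_mult_mat_vec[symmetric, OF gram_carrier]) auto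
  also have "\<dots> = transpose_mat HK *\<^sub>v (H *\<^sub>v x0)"
    using x0 inv_gram(2) by simp
  finally have "transpose_mat HK *\<^sub>v residual x0 = 0\<^sub>v (length ks)"
    unfolding residual_def using x0
    by (subst mult_minus_distrib_mat_vec[OF transpose_col_submat_carrier]) auto
  then have "(transpose_mat HK *\<^sub>v residual x0) $ j = 0" using j by simp
  then show ?thesis
    using j x0 H by (simp add: residual_def scalar_prod_def atLeast0LessThan)
qed

text \<open>Split x0 = y + r with y supported on K. Then H r = p - e with p in the range of H_K,
  which is orthogonal to the residual e; hence |e|^2 <= |H r|^2 <= (1 + delta_S) |r|^2.\<close>
lemma residual_bound:
  assumes x0s: "x0 \<in> sparse_set N S"
  defines "r \<equiv> restrict_vec x0 (supp_vec x0 - set ks)"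
  shows "scalar_prod (residual x0) (residual x0) \<le> (1 + rip_const H S) * scalar_prod r r"
proof -
  have x0: "x0 \<in> carrier_vec N" and "card (supp_vec x0) \<le> S"
    using x0s unfolding sparse_set_def by auto
  define y where "y = restrict_vec x0 (set ks)"
  have y: "y \<in> carrier_vec N" "\<And>j. j < N \<Longrightarrow> j \<notin> set ks \<Longrightarrow> y $ j = 0"
    and r: "r \<in> carrier_vec N"
    using x0 unfolding y_def r_def restrict_vec_def by auto
  have "x0 = y + r"
    using x0 y r by (intro eq_vecI) (auto simp: y_def r_def restrict_vec_def supp_vec_def)
  then have H_x0: "H *\<^sub>v x0 = HK *\<^sub>v select_vec ks y + H *\<^sub>v r"
    using mult_add_distrib_mat_vec[OF H y(1) r] mult_mat_vec_eq_col_submat[OF H distinct_ks set_ks y] by simp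
  define e where "e i = residual x0 $ i" for i
  define \<alpha> where "\<alpha> j = ls_coeffs x0 $ j - select_vec ks y $ j" for j
  define p where "p i = (\<Sum>j<length ks. HK $$ (i, j) * \<alpha> j)" for i
  have H_r: "(H *\<^sub>v r) $ i = p i - e i" if "i < M" for i
  proof -
    have "(HK *\<^sub>v ls_coeffs x0) $ i - (HK *\<^sub>v select_vec ks y) $ i = p i"
      using that ls_coeffs_carrier[OF x0] unfolding p_def \<alpha>_def
      by (simp add: select_vec_def scalar_prod_def atLeast0LessThan sum_subtractf[symmetric] algebra_simps)
    then show ?thesis
      using that x0 H_x0 H r unfolding e_def
      by (simp add: residual_nth mult_embed_vec[OF ls_coeffs_carrier[OF x0]])
  qed
  have "(\<Sum>i<M. p i * e i) = (\<Sum>j<length ks. \<alpha> j * (\<Sum>i<M. HK $$ (i, j) * e i))"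
    unfolding p_def by (simp add: sum_distrib_left sum_distrib_right algebra_simps sum.swap[of _ "{..<M}"])
  also have "\<dots> = 0" using residual_orthogonal[OF x0] unfolding e_def by simp
  finally have "(\<Sum>i<M. p i * e i) = 0" .
  moreover have "(\<Sum>i<M. (p i - e i)\<^sup>2) = (\<Sum>i<M. (p i)\<^sup>2) - 2 * (\<Sum>i<M. p i * e i) + (\<Sum>i<M. (e i)\<^sup>2)"
    by (simp add: power2_diff sum.distrib sum_subtractf sum_distrib_left algebra_simps)
  moreover have "0 \<le> (\<Sum>i<M. (p i)\<^sup>2)" by (intro sum_nonneg) auto
  ultimately have "(\<Sum>i<M. (e i)\<^sup>2) \<le> (\<Sum>i<M. (p i - e i)\<^sup>2)" by simp
  also have "\<dots> = (H *\<^sub>v r) \<bullet> (H *\<^sub>v r)" using H_r H unfolding scalar_prod_self_eq_sum_squares by simp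
  also have "\<dots> \<le> (1 + rip_const H S) * (r \<bullet> r)"
  proof (rule rip_const_bounds(2)[OF H S_le_N _ _ r])
    have "card (supp_vec x0 - set ks) \<le> card (supp_vec x0)"
      by (rule card_mono) (auto simp: supp_vec_def)
    then show "card (supp_vec x0 - set ks) \<le> S" using \<open>card (supp_vec x0) \<le> S\<close> by simp
  qed (use x0 in \<open>auto simp: r_def restrict_vec_def supp_vec_def\<close>)
  finally show ?thesis
    using H x0 unfolding e_def scalar_prod_self_eq_sum_squares by (simp add: residual_def)
qed

lemma embed_ls_coeffs_sparse: "embed_vec N ks (ls_coeffs x0) \<in> sparse_set N S"
  using supp_vec_embed_vec length_ks card_length[of ks] by (intro sparse_setI[where A = "set ks"]) auto

lemma test_point_sparse:
  "j < length ks \<Longrightarrow> embed_vec N ks (ls_coeffs x0) + t \<cdot>\<^sub>v unit_vec N (ks ! j) \<in> sparse_set N S"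
  using supp_vec_embed_vec length_ks card_length[of ks]
  by (intro sparse_setI[where A = "set ks"] supp_vec_add_smult_unit_vec_subset) auto

lemma gauss_kernel_test_points:
  assumes x0: "x0 \<in> carrier_vec N" and j: "j < length ks" and j': "j' < length ks"
  defines "xt \<equiv> embed_vec N ks (ls_coeffs x0)"
  shows "gauss_kernel \<sigma> M (\<lambda>i. (H *\<^sub>v x0) $ i) (\<lambda>i. (H *\<^sub>v (xt + s \<cdot>\<^sub>v unit_vec N (ks ! j))) $ i)
           (\<lambda>i. (H *\<^sub>v (xt + t \<cdot>\<^sub>v unit_vec N (ks ! j'))) $ i)
       = exp (scalar_prod (residual x0) (residual x0) / \<sigma>\<^sup>2) * exp (s * t * gram $$ (j, j') / \<sigma>\<^sup>2)"
proof -
  define e where "e i = residual x0 $ i" for i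
  have shift: "(H *\<^sub>v (xt + s \<cdot>\<^sub>v unit_vec N (ks ! j))) $ i - (H *\<^sub>v x0) $ i = e i + s * HK $$ (i, j)"
    if "i < M" "j < length ks" for i j s
    using that x0 mult_mat_vec_add_smult_unit_vec[OF H _ nth_ks_less]
    by (simp add: e_def xt_def residual_nth col_submat_nth)
  have "(\<Sum>i<M. ((H *\<^sub>v (xt + s \<cdot>\<^sub>v unit_vec N (ks ! j))) $ i - (H *\<^sub>v x0) $ i)
                  * ((H *\<^sub>v (xt + t \<cdot>\<^sub>v unit_vec N (ks ! j'))) $ i - (H *\<^sub>v x0) $ i) / \<sigma>\<^sup>2)
      = (\<Sum>i<M. (e i + s * HK $$ (i, j)) * (e i + t * HK $$ (i, j')) / \<sigma>\<^sup>2)"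
    using j j' by (intro sum.cong refl) (simp add: shift)
  also have "\<dots> = (\<Sum>i<M. e i * e i) / \<sigma>\<^sup>2 + s * (\<Sum>i<M. HK $$ (i, j) * e i) / \<sigma>\<^sup>2
        + t * (\<Sum>i<M. HK $$ (i, j') * e i) / \<sigma>\<^sup>2 + s * t * (\<Sum>i<M. HK $$ (i, j) * HK $$ (i, j')) / \<sigma>\<^sup>2"
    by (simp add: sum.distrib sum_distrib_left sum_divide_distrib algebra_simps add_divide_distrib)
  also have "\<dots> = scalar_prod (residual x0) (residual x0) / \<sigma>\<^sup>2 + s * t * gram $$ (j, j') / \<sigma>\<^sup>2"
    using residual_orthogonal[OF x0] j j' H
    by (simp add: e_def gram_nth residual_def scalar_prod_def atLeast0LessThan)
  finally show ?thesis
    unfolding gauss_kernel_def by (simp add: exp_add)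
qed

lemma gauss_kernel_second_difference:
  fixes \<sigma> t :: real
  assumes x0: "x0 \<in> carrier_vec N" and j: "j < length ks" and j': "j' < length ks"
  defines "xt \<equiv> embed_vec N ks (ls_coeffs x0)"
  defines "mean \<equiv> \<lambda>x i. (H *\<^sub>v x) $ i"
  defines "K \<equiv> gauss_kernel \<sigma> M (mean x0)"
  shows "K (mean (xt + t \<cdot>\<^sub>v unit_vec N (ks ! j))) (mean (xt + t \<cdot>\<^sub>v unit_vec N (ks ! j')))
       - K (mean (xt + t \<cdot>\<^sub>v unit_vec N (ks ! j))) (mean xt)
       - K (mean xt) (mean (xt + t \<cdot>\<^sub>v unit_vec N (ks ! j'))) + K (mean xt) (mean xt)
       = exp (scalar_prod (residual x0) (residual x0) / \<sigma>\<^sup>2) * (exp (t\<^sup>2 * (gram $$ (j, j') / \<sigma>\<^sup>2)) - 1)"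
proof -
  have "xt + 0 \<cdot>\<^sub>v unit_vec N l = xt" for l
    by (intro eq_vecI) (auto simp: xt_def)
  moreover have "t * t * gram $$ (j, j') / \<sigma>\<^sup>2 = t\<^sup>2 * (gram $$ (j, j') / \<sigma>\<^sup>2)"
    by (simp add: power2_eq_square)
  ultimately show ?thesis
    using gauss_kernel_test_points[OF x0 j j', of \<sigma> t t] gauss_kernel_test_points[OF x0 j j', of \<sigma> t 0]
      gauss_kernel_test_points[OF x0 j j', of \<sigma> 0 t] gauss_kernel_test_points[OF x0 j j', of \<sigma> 0 0]
    unfolding K_def mean_def xt_def by (simp add: right_diff_distrib)
qed

lemma difference_quotient_bound:
  fixes a :: "nat \<Rightarrow> real"
  assumes \<sigma>: "0 < \<sigma>" and "k < N" and x0: "x0 \<in> sparse_set N S" and "t \<noteq> 0"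
    and g: "g \<in> estimators M" "finite_var H \<sigma> g x0"
    and unbiased: "\<forall>x \<in> sparse_set N S. integrable (obs_dist H \<sigma> x) g \<and> est_bias H \<sigma> k g x = c x"
  defines "xt \<equiv> embed_vec N ks (ls_coeffs x0)"
  shows "(\<Sum>j<length ks. a j * ((if k = ks ! j then 1 else 0) + (c (xt + t \<cdot>\<^sub>v unit_vec N (ks ! j)) - c xt) / t))\<^sup>2
    \<le> est_var H \<sigma> g x0 * (exp (scalar_prod (residual x0) (residual x0) / \<sigma>\<^sup>2) *
        (\<Sum>j<length ks. \<Sum>j'<length ks. a j * a j' * ((exp (t\<^sup>2 * (gram $$ (j, j') / \<sigma>\<^sup>2)) - 1) / t\<^sup>2)))"
proof -
  have x0c: "x0 \<in> carrier_vec N" using x0 unfolding sparse_set_def by auto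
  have xt: "xt \<in> carrier_vec N" unfolding xt_def by simp
  define mean where "mean x = (\<lambda>i. (H *\<^sub>v x) $ i)" for x
  define test where "test j s = xt + s \<cdot>\<^sub>v unit_vec N (ks ! j)" for j s
  have obs: "obs_dist H \<sigma> x = gauss_PiM \<sigma> M (mean x)" for x
    unfolding obs_dist_eq_gauss_PiM mean_def using H by simp
  have test_sparse: "test j s \<in> sparse_set N S" if "j < length ks" for j s
    using test_point_sparse[OF that] unfolding test_def xt_def .
  have E: "(\<integral>y. g y \<partial>gauss_PiM \<sigma> M (mean x)) = x $ k + c x"
    and I: "integrable (gauss_PiM \<sigma> M (mean x)) g" if "x \<in> sparse_set N S" for x
    using unbiased that unfolding est_bias_def est_mean_def obs by auto
  have "(\<Sum>j<length ks. a j / t * ((\<integral>y. g y \<partial>gauss_PiM \<sigma> M (mean (test j t))) - (\<integral>y. g y \<partial>gauss_PiM \<sigma> M (mean xt))))\<^sup>2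
    \<le> (\<integral>y. (g y - (\<integral>y. g y \<partial>gauss_PiM \<sigma> M (mean x0)))\<^sup>2 \<partial>gauss_PiM \<sigma> M (mean x0)) *
      (\<Sum>j<length ks. \<Sum>j'<length ks. a j / t * (a j' / t) *
        (gauss_kernel \<sigma> M (mean x0) (mean (test j t)) (mean (test j' t))
         - gauss_kernel \<sigma> M (mean x0) (mean (test j t)) (mean xt)
         - gauss_kernel \<sigma> M (mean x0) (mean xt) (mean (test j' t))
         + gauss_kernel \<sigma> M (mean x0) (mean xt) (mean xt)))"
    using g H I[OF x0] I[OF test_sparse] I[OF embed_ls_coeffs_sparse[of x0, folded xt_def]]
    unfolding finite_var_def estimators_def obs
    by (intro barankin_bound[OF \<sigma>]) auto
  also have "\<dots> = est_var H \<sigma> g x0 * (exp (scalar_prod (residual x0) (residual x0) / \<sigma>\<^sup>2) *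
        (\<Sum>j<length ks. \<Sum>j'<length ks. a j * a j' * ((exp (t\<^sup>2 * (gram $$ (j, j') / \<sigma>\<^sup>2)) - 1) / t\<^sup>2)))"
  proof -
    let ?E = "exp (scalar_prod (residual x0) (residual x0) / \<sigma>\<^sup>2)"
    have "(\<Sum>j<length ks. \<Sum>j'<length ks. a j / t * (a j' / t) *
        (gauss_kernel \<sigma> M (mean x0) (mean (test j t)) (mean (test j' t))
         - gauss_kernel \<sigma> M (mean x0) (mean (test j t)) (mean xt)
         - gauss_kernel \<sigma> M (mean x0) (mean xt) (mean (test j' t))
         + gauss_kernel \<sigma> M (mean x0) (mean xt) (mean xt)))
      = ?E * (\<Sum>j<length ks. \<Sum>j'<length ks. a j * a j' * ((exp (t\<^sup>2 * (gram $$ (j, j') / \<sigma>\<^sup>2)) - 1) / t\<^sup>2))"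
      unfolding sum_distrib_left
      using gauss_kernel_second_difference[OF x0c, where \<sigma> = \<sigma> and t = t]
      by (intro sum.cong refl) (simp add: power2_eq_square mean_def test_def xt_def)
    then show ?thesis by (simp add: est_var_def est_mean_def obs)
  qed
  also have "(\<Sum>j<length ks. a j / t * ((\<integral>y. g y \<partial>gauss_PiM \<sigma> M (mean (test j t))) - (\<integral>y. g y \<partial>gauss_PiM \<sigma> M (mean xt))))
    = (\<Sum>j<length ks. a j * ((if k = ks ! j then 1 else 0) + (c (test j t) - c xt) / t))"
  proof (intro sum.cong refl)
    fix j assume "j \<in> {..<length ks}"
    then have j: "j < length ks" by simp
    have "test j t $ k = xt $ k + t * (if k = ks ! j then 1 else 0)"
      using \<open>k < N\<close> xt nth_ks_less[OF j] by (simp add: test_def)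
    then show "a j / t * ((\<integral>y. g y \<partial>gauss_PiM \<sigma> M (mean (test j t))) - (\<integral>y. g y \<partial>gauss_PiM \<sigma> M (mean xt)))
      = a j * ((if k = ks ! j then 1 else 0) + (c (test j t) - c xt) / t)"
      using \<open>t \<noteq> 0\<close> E[OF test_sparse[OF j]] E[OF embed_ls_coeffs_sparse[of x0, folded xt_def]]
      by (simp add: field_simps)
  qed
  finally show ?thesis unfolding test_def .
qed

lemma weighted_partials_bound:
  assumes \<sigma>: "0 < \<sigma>" and "k < N" and x0: "x0 \<in> sparse_set N S"
    and g: "g \<in> estimators M" "finite_var H \<sigma> g x0"
    and unbiased: "\<forall>x \<in> sparse_set N S. integrable (obs_dist H \<sigma> x) g \<and> est_bias H \<sigma> k g x = c x"
    and partials: "\<forall>l \<in> set ks. has_partial_at c (embed_vec N ks (ls_coeffs x0)) l"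
    and a: "a \<in> carrier_vec (length ks)"
  defines "b \<equiv> vec (length ks) (\<lambda>i. (if k = ks ! i then 1 else 0)
                 + partial_at c (embed_vec N ks (ls_coeffs x0)) (ks ! i))"
  defines "U \<equiv> scalar_prod (residual x0) (residual x0) / \<sigma>\<^sup>2"
  shows "(scalar_prod a b)\<^sup>2 \<le> est_var H \<sigma> g x0 * (exp U * (scalar_prod a (gram *\<^sub>v a) / \<sigma>\<^sup>2))"
proof -
  define xt where "xt = embed_vec N ks (ls_coeffs x0)"
  define quotient where "quotient t = (\<Sum>j<length ks. a $ j * ((if k = ks ! j then 1 else 0)
      + (c (xt + t \<cdot>\<^sub>v unit_vec N (ks ! j)) - c xt) / t))" for t
  define kernel_sum where "kernel_sum t = (\<Sum>j<length ks. \<Sum>j'<length ks.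
      a $ j * a $ j' * ((exp (t\<^sup>2 * (gram $$ (j, j') / \<sigma>\<^sup>2)) - 1) / t\<^sup>2))" for t
  have "(\<lambda>t. (c (xt + t \<cdot>\<^sub>v unit_vec N (ks ! j)) - c xt) / t) \<midarrow>0\<rightarrow> partial_at c xt (ks ! j)"
    if "j < length ks" for j
    using tendsto_partial_at[of c xt "ks ! j"] partials that unfolding xt_def by simp
  then have "(\<lambda>t. (quotient t)\<^sup>2)
      \<midarrow>0\<rightarrow> (\<Sum>j<length ks. a $ j * ((if k = ks ! j then 1 else 0) + partial_at c xt (ks ! j)))\<^sup>2"
    unfolding quotient_def by (intro tendsto_intros) auto
  also have "(\<Sum>j<length ks. a $ j * ((if k = ks ! j then 1 else 0) + partial_at c xt (ks ! j)))
      = scalar_prod a b"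
    unfolding scalar_prod_def b_def xt_def by (simp add: atLeast0LessThan)
  finally have lim_quotient: "(\<lambda>t. (quotient t)\<^sup>2) \<midarrow>0\<rightarrow> (scalar_prod a b)\<^sup>2" .
  have "kernel_sum \<midarrow>0\<rightarrow> (\<Sum>j<length ks. \<Sum>j'<length ks. a $ j * a $ j' * (gram $$ (j, j') / \<sigma>\<^sup>2))"
    unfolding kernel_sum_def by (intro tendsto_intros tendsto_exp_square_quotient)
  also have "(\<Sum>j<length ks. \<Sum>j'<length ks. a $ j * a $ j' * (gram $$ (j, j') / \<sigma>\<^sup>2))
      = scalar_prod a (gram *\<^sub>v a) / \<sigma>\<^sup>2"
    unfolding scalar_prod_gram_sum[OF a] by (simp add: sum_divide_distrib)
  finally have lim_kernel: "kernel_sum \<midarrow>0\<rightarrow> scalar_prod a (gram *\<^sub>v a) / \<sigma>\<^sup>2" .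
  have "\<forall>\<^sub>F t in at 0. (quotient t)\<^sup>2 \<le> est_var H \<sigma> g x0 * (exp U * kernel_sum t)"
    unfolding eventually_at_filter U_def xt_def quotient_def kernel_sum_def
    by (intro always_eventually allI impI difference_quotient_bound[OF \<sigma> \<open>k < N\<close> x0 _ g unbiased])
  then show ?thesis
    by (intro tendsto_le[OF _ tendsto_mult_left[OF tendsto_mult_left[OF lim_kernel]] lim_quotient]) simp_all
qed

lemma est_var_lower_bound:
  assumes \<sigma>: "0 < \<sigma>" and "k < N" and x0: "x0 \<in> sparse_set N S"
    and g: "g \<in> estimators M" "finite_var H \<sigma> g x0"
    and unbiased: "\<forall>x \<in> sparse_set N S. integrable (obs_dist H \<sigma> x) g \<and> est_bias H \<sigma> k g x = c x"
    and partials: "\<forall>l \<in> set ks. has_partial_at c (embed_vec N ks (ls_coeffs x0)) l"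
  defines "b \<equiv> vec (length ks) (\<lambda>i. (if k = ks ! i then 1 else 0)
                 + partial_at c (embed_vec N ks (ls_coeffs x0)) (ks ! i))"
  defines "r \<equiv> restrict_vec x0 (supp_vec x0 - set ks)"
  shows "exp (- (1 + rip_const H S) / \<sigma>\<^sup>2 * scalar_prod r r) * \<sigma>\<^sup>2 * scalar_prod b (inv_mat gram *\<^sub>v b)
    \<le> est_var H \<sigma> g x0"
proof -
  define a where "a = inv_mat gram *\<^sub>v b"
  have b: "b \<in> carrier_vec (length ks)" and a: "a \<in> carrier_vec (length ks)"
    unfolding a_def b_def using inv_gram(1) by auto
  have "gram *\<^sub>v a = b"
    unfolding a_def using inv_gram(1,2) b by (simp add: assoc_mult_mat_vec[symmetric, OF gram_carrier])
  then have q: "scalar_prod b (inv_mat gram *\<^sub>v b) = scalar_prod a (gram *\<^sub>v a)"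
    unfolding a_def[symmetric] using a b by (simp add: comm_scalar_prod[of a "length ks" b])
  have "(scalar_prod a (gram *\<^sub>v a))\<^sup>2 \<le> est_var H \<sigma> g x0 *
      (exp (scalar_prod (residual x0) (residual x0) / \<sigma>\<^sup>2) * (scalar_prod a (gram *\<^sub>v a) / \<sigma>\<^sup>2))"
    using weighted_partials_bound[OF assms(1-7) a] \<open>gram *\<^sub>v a = b\<close> unfolding b_def by simp
  moreover have "0 \<le> scalar_prod a (gram *\<^sub>v a)"
    unfolding scalar_prod_gram[OF a] by (rule scalar_prod_self_nonneg)
  moreover have "0 \<le> est_var H \<sigma> g x0" unfolding est_var_def by simp
  moreover have "scalar_prod (residual x0) (residual x0) / \<sigma>\<^sup>2 \<le> (1 + rip_const H S) * scalar_prod r r / \<sigma>\<^sup>2"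
    unfolding r_def by (rule divide_right_mono[OF residual_bound[OF x0]]) simp
  ultimately have "exp (- ((1 + rip_const H S) * scalar_prod r r / \<sigma>\<^sup>2)) * \<sigma>\<^sup>2 * scalar_prod a (gram *\<^sub>v a)
      \<le> est_var H \<sigma> g x0"
    using \<sigma> by (intro exp_scaled_le_of_square_le) auto
  moreover have "- (1 + rip_const H S) / \<sigma>\<^sup>2 * scalar_prod r r = - ((1 + rip_const H S) * scalar_prod r r / \<sigma>\<^sup>2)"
    by (simp only: times_divide_eq_left mult_minus_left minus_divide_left)
  ultimately show ?thesis by (simp add: q)
qed

end

theorem theorem9:
  fixes M N S k :: nat and \<sigma> :: real and H :: "real mat" and x0 :: "real vec"
    and ks :: "nat list" and c :: "real vec \<Rightarrow> real"
  assumes "1 \<le> S" "S \<le> N" "M \<le> N" "\<sigma> > 0" "k < N"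
    and "H \<in> carrier_mat M N"
    and "rip_const H S < 1"
    and "x0 \<in> sparse_set N S"
    and "distinct ks" "set ks \<subseteq> {..<N}" "length ks \<le> S"
  defines "HK \<equiv> col_submat H ks"
  defines "P \<equiv> HK * pinv_mat HK"
  defines "xt \<equiv> (THE x. x \<in> carrier_vec N \<and> supp_vec x \<subseteq> set ks \<and> H *\<^sub>v x = P *\<^sub>v (H *\<^sub>v x0))"
  assumes "\<forall>l \<in> set ks. has_partial_at c xt l"
  defines "b \<equiv> vec (length ks) (\<lambda>i. (if k = ks ! i then 1 else 0) + partial_at c xt (ks ! i))"
  defines "r \<equiv> restrict_vec x0 (supp_vec x0 - set ks)"
  shows "min_var H \<sigma> S k c x0 \<ge>
     ereal (exp (- (1 + rip_const H S) / \<sigma>\<^sup>2 * (scalar_prod r r)) * \<sigma>\<^sup>2 *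
            (scalar_prod b (inv_mat (transpose_mat HK * HK) *\<^sub>v b)))"
proof -
  interpret rip_columns H M N S ks using assms by unfold_locales auto
  have "x0 \<in> carrier_vec N" using \<open>x0 \<in> sparse_set N S\<close> unfolding sparse_set_def by auto
  then have xt: "xt = embed_vec N ks (ls_coeffs x0)"
    unfolding xt_def P_def HK_def by (rule projection_eq_embed_ls_coeffs)
  show ?thesis
    unfolding min_var_def HK_def gram_def[symmetric]
  proof (rule Inf_greatest, clarify)
    fix g assume "g \<in> estimators (dim_row H)" "finite_var H \<sigma> g x0"
      "\<forall>x \<in> sparse_set (dim_col H) S. integrable (obs_dist H \<sigma> x) g \<and> est_bias H \<sigma> k g x = c x"
    then show "ereal (exp (- (1 + rip_const H S) / \<sigma>\<^sup>2 * scalar_prod r r) * \<sigma>\<^sup>2 * scalar_prod b (inv_mat gram *\<^sub>v b))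
        \<le> ereal (est_var H \<sigma> g x0)"
      using est_var_lower_bound[of \<sigma> k x0 g c] assms xt unfolding b_def r_def by simp
  qed
qed

end
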